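(* Let $(G,\cdot)$ be a loop with identity $e$ and let $(H,\cdot)$ be a non-trivial subloop of $G$. Suppose that $(xs\cdot z)s=x(sz\cdot s)$ for all $x,z\in G$ and all $s\in H$. Then: (i) $xs\cdot s^\rho=x$ for all $x\in G$ and $s\in H$; (ii) $x\cdot ss=xs\cdot s$ for all $x\in G$ and $s\in H$.
   Context: Juxtaposition binds more tightly than $\cdot$; e.g. $xs\cdot z$ means $(xs)z$. For $x$ in a loop with identity $e$, the right inverse $x^\rho$ is the unique element with $xx^\rho=e$. *)

theory Defs
  imports Main
begin

definition loop :: "'a set \<Rightarrow> ('a \<Rightarrow> 'a \<Rightarrow> 'a) \<Rightarrow> 'a \<Rightarrow> bool" where
  "loop G m e \<longleftrightarrow>
     e \<in> G \<and>
     (\<forall>x\<in>G. \<forall>y\<in>G. m x y \<in> G) \<and>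
     (\<forall>x\<in>G. m e x = x \<and> m x e = x) \<and>
     (\<forall>a\<in>G. \<forall>b\<in>G. \<exists>!x. x \<in> G \<and> m a x = b) \<and>
     (\<forall>a\<in>G. \<forall>b\<in>G. \<exists>!y. y \<in> G \<and> m y a = b)"

text \<open>A subloop: a subset of G which is itself a loop under the restricted operation
(with the same identity, which is forced).\<close>
definition subloop :: "'a set \<Rightarrow> 'a set \<Rightarrow> ('a \<Rightarrow> 'a \<Rightarrow> 'a) \<Rightarrow> 'a \<Rightarrow> bool" where
  "subloop H G m e \<longleftrightarrow> H \<subseteq> G \<and> loop H m e"

definition rinv :: "'a set \<Rightarrow> ('a \<Rightarrow> 'a \<Rightarrow> 'a) \<Rightarrow> 'a \<Rightarrow> 'a \<Rightarrow> 'a" where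
  "rinv G m e x = (THE y. y \<in> G \<and> m x y = e)"

end

theory Submission
  imports Defs
begin

text \<open>Setting z = s^\<rho> in the identity gives (xs\<cdot>s^\<rho>)s = xs, and right cancellation
of s yields (i); setting z = e gives (ii) directly.\<close>

lemma
  assumes "loop G m e"
  shows loop_identity_mem: "e \<in> G"
    and loop_closed: "\<And>x y. x \<in> G \<Longrightarrow> y \<in> G \<Longrightarrow> m x y \<in> G"
    and loop_left_identity: "\<And>x. x \<in> G \<Longrightarrow> m e x = x"
    and loop_right_identity: "\<And>x. x \<in> G \<Longrightarrow> m x e = x"
    and loop_left_div_unique: "\<And>a b. a \<in> G \<Longrightarrow> b \<in> G \<Longrightarrow> \<exists>!x. x \<in> G \<and> m a x = b"
    and loop_right_div_unique: "\<And>a b. a \<in> G \<Longrightarrow> b \<in> G \<Longrightarrow> \<exists>!y. y \<in> G \<and> m y a = b"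
  using assms unfolding loop_def by auto

lemma loop_rinv:
  assumes "loop G m e" and "s \<in> G"
  shows "rinv G m e s \<in> G" and "m s (rinv G m e s) = e"
  using theI'[OF loop_left_div_unique[OF assms(1,2) loop_identity_mem[OF assms(1)]]]
  unfolding rinv_def by auto

lemma loop_right_cancel:
  assumes "loop G m e" and "a \<in> G" "x \<in> G" "y \<in> G" and "m x a = m y a"
  shows "x = y"
  using loop_right_div_unique[OF assms(1,2) loop_closed[OF assms(1,3,2)]] assms(3-5)
  by (elim ex1E) metis

lemma right_inverse_property:
  assumes G: "loop G m e" and "H \<subseteq> G"
    and ident: "\<forall>x\<in>G. \<forall>z\<in>G. \<forall>s\<in>H. m (m (m x s) z) s = m x (m (m s z) s)"
    and x: "x \<in> G" and s: "s \<in> H"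
  shows "m (m x s) (rinv G m e s) = x"
proof -
  have sG: "s \<in> G" using s \<open>H \<subseteq> G\<close> by blast
  note \<rho> = loop_rinv[OF G sG]
  have "m (m (m x s) (rinv G m e s)) s = m x (m (m s (rinv G m e s)) s)"
    using ident x s \<rho>(1) by blast
  also have "\<dots> = m x s"
    using \<rho>(2) loop_left_identity[OF G sG] by simp
  finally have "m (m (m x s) (rinv G m e s)) s = m x s" .
  moreover have "m (m x s) (rinv G m e s) \<in> G"
    using loop_closed[OF G loop_closed[OF G x sG] \<rho>(1)] .
  ultimately show ?thesis
    using loop_right_cancel[OF G sG _ x] by blast
qed

lemma right_alternative_property:
  assumes G: "loop G m e" and "H \<subseteq> G"
    and ident: "\<forall>x\<in>G. \<forall>z\<in>G. \<forall>s\<in>H. m (m (m x s) z) s = m x (m (m s z) s)"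
    and x: "x \<in> G" and s: "s \<in> H"
  shows "m x (m s s) = m (m x s) s"
proof -
  have sG: "s \<in> G" using s \<open>H \<subseteq> G\<close> by blast
  have "m (m (m x s) e) s = m x (m (m s e) s)"
    using ident x s loop_identity_mem[OF G] by blast
  then show ?thesis
    using loop_right_identity[OF G sG] loop_right_identity[OF G loop_closed[OF G x sG]]
    by simp
qed

theorem theorem3p1:
  fixes G H :: "'a set" and m :: "'a \<Rightarrow> 'a \<Rightarrow> 'a" and e :: 'a
  assumes "loop G m e"
    and "subloop H G m e"
    and "H \<noteq> {e}"
    and "\<forall>x\<in>G. \<forall>z\<in>G. \<forall>s\<in>H. m (m (m x s) z) s = m x (m (m s z) s)"
  shows "(\<forall>x\<in>G. \<forall>s\<in>H. m (m x s) (rinv G m e s) = x) \<and>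
         (\<forall>x\<in>G. \<forall>s\<in>H. m x (m s s) = m (m x s) s)"
proof -
  have "H \<subseteq> G" using assms(2) unfolding subloop_def by blast
  then show ?thesis
    using right_inverse_property[OF assms(1) _ assms(4)]
      right_alternative_property[OF assms(1) _ assms(4)] by blast
qed

end
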